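(* Let $(a_n)_n=[a_{n\varepsilon}]_{\mathrm s}$, $(b_n)_n=[b_{n\varepsilon}]_{\mathrm s}\in\widetilde{\mathbb R}_{\mathrm s}$ with $(a_n)_n\ge0$ and $(b_n)_n\ge0$, and assume that there exists $N\in\mathbb N$ such that $(a_{n+N})_n\le(b_{n+N})_n$, where $(a_{n+N})_n:=[a_{n+N,\varepsilon}]_{\mathrm s}$ and similarly for $b$. Then: (i) if the hyperseries $\sum_{n\in\widetilde{\mathbb N}}b_n$ converges, then so does $\sum_{n\in\widetilde{\mathbb N}}a_n$; (ii) if $\sum_{n\in\widetilde{\mathbb N}}a_n$ diverges to $+\infty$, then so does $\sum_{n\in\widetilde{\mathbb N}}b_n$.
   Context: Fix $I=(0,1]$ and a gauge $\rho=(\rho_\varepsilon)_{\varepsilon\in I}$ with $\rho_\varepsilon\in I$ and $\rho_\varepsilon\to0$ as $\varepsilon\to0$. "$\forall^0\varepsilon$" means "for all sufficiently small $\varepsilon\in I$". A net $(x_\varepsilon)\in\mathbb C^I$ is $\rho$-moderate ($(x_\varepsilon)\in\mathbb C_\rho$) if $\exists N\in\mathbb N\,\forall^0\varepsilon:|x_\varepsilon|\le\rho_\varepsilon^{-N}$, and $\rho$-negligible if $\forall q\in\mathbb N\,\forall^0\varepsilon:|x_\varepsilon|\le\rho_\varepsilon^q$. $\widetilde{\mathbb C}:=\mathbb C_\rho/\{\text{negligible nets}\}$ with classes $[x_\varepsilon]$; $\widetilde{\mathbb R}\subseteq\widetilde{\mathbb C}$ consists of classes of real moderate nets; $\mathrm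 d\rho:=[\rho_\varepsilon]$, $|[z_\varepsilon]|:=[|z_\varepsilon|]$. On $\widetilde{\mathbb R}$: $[x_\varepsilon]\le[y_\varepsilon]$ iff $x_\varepsilon\le y_\varepsilon+z_\varepsilon$ $\forall^0\varepsilon$ for some negligible $(z_\varepsilon)$; $x<y$ iff $\exists m\,\forall^0\varepsilon:y_\varepsilon-x_\varepsilon>\rho_\varepsilon^m$. Hypernatural numbers: $\widetilde{\mathbb N}:=\{[n_\varepsilon]\in\widetilde{\mathbb R}:n_\varepsilon\in\mathbb N\ \forall\varepsilon\}$; for each $N\in\widetilde{\mathbb N}$ a representative $(\mathrm{ni}(N)_\varepsilon)$ with all $\mathrm{ni}(N)_\varepsilon\in\mathbb N$ is fixed. Hyperlimit: for a map $n\in\widetilde{\mathbb N}\mapsto a_n\in\widetilde{\mathbb C}$, $l=\lim_{n\in\widetilde{\mathbb N}}a_n$ means $\forall q\in\mathbb N\,\exists M\in\widetilde{\mathbb N}\,\forall n\in\widetilde{\mathbb N}:n\ge M\Rightarrow|a_n-l|<\mathrm d\rho^q$. Hyperseries: a net $(a_{n\varepsilon})_{n\in\mathbb N,\varepsilon\in I}$ of complex numbers is moderate over hypersums if for every $N\in\widetilde{\mathbb N}$ the net $(\sum_{n=0}^{\mathrm{ni}(N)_\varepsilon}a_{n\varepsilon})_\varepsilon$ is $\rho$-moderate; two such nets $(a_{n\varepsilon}),(\bar a_{n\varepsilon})$ are equivalent if for all $N,M\in\widetilde{\mathbb N}$ the net $(\sum_{n=\mathrm{ni}(N)_\varepsilon}^{\mathrm{ni}(M)_\varepsilon}(a_{n\varepsilon}-\bar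 a_{n\varepsilon}))_\varepsilon$ is negligible. The quotient is $\widetilde{\mathbb C}_{\mathrm s}$ (resp. $\widetilde{\mathbb R}_{\mathrm s}$ for real nets), with classes $(a_n)_n=[a_{n\varepsilon}]_{\mathrm s}$. For $N,M\in\widetilde{\mathbb N}$, $\sum_{n=N}^Ma_n:=[\sum_{n=\mathrm{ni}(N)_\varepsilon}^{\mathrm{ni}(M)_\varepsilon}a_{n\varepsilon}]$ (empty sums equal $0$). The hyperseries $\sum_{n\in\widetilde{\mathbb N}}a_n$ converges to $s$ if $s=\lim_{N\in\widetilde{\mathbb N}}\sum_{n=0}^Na_n$ exists in $\widetilde{\mathbb C}$; it diverges to $+\infty$ if for every $K\in\widetilde{\mathbb R}$ there is $M\in\widetilde{\mathbb N}$ with $\sum_{n=0}^Na_n>K$ for all $N\in\widetilde{\mathbb N}_{\ge M}$. Order on $\widetilde{\mathbb R}_{\mathrm s}$: $(a_n)_n\le(b_n)_n$ iff $\sum_{n=N}^Ma_n\le\sum_{n=N}^Mb_n$ in $\widetilde{\mathbb R}$ for all $N,M\in\widetilde{\mathbb N}$; $(a_n)_n\ge0$ means $0\le(a_n)_n$. *)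

theory Defs
  imports Complex_Main
begin

text \<open>Nets are functions on the reals; only their values on I = (0,1] near 0 matter.
  "for all sufficiently small eps in I" is the filter at_right 0.
  The gauge rho is a parameter of all notions.\<close>

definition gauge :: "(real \<Rightarrow> real) \<Rightarrow> bool" where
  "gauge rho \<longleftrightarrow> (\<forall>e\<in>{0<..1}. rho e \<in> {0<..1}) \<and> (rho \<longlongrightarrow> 0) (at_right 0)"

definition rmoderate :: "(real \<Rightarrow> real) \<Rightarrow> (real \<Rightarrow> 'a::real_normed_vector) \<Rightarrow> bool" where
  "rmoderate rho x \<longleftrightarrow> (\<exists>N::nat. \<forall>\<^sub>F e in at_right 0. norm (x e) \<le> 1 / rho e ^ N)"

definition rnegligible :: "(real \<Rightarrow> real) \<Rightarrow> (real \<Rightarrow> 'a::real_normed_vector) \<Rightarrow> bool" where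
  "rnegligible rho x \<longleftrightarrow> (\<forall>q::nat. \<forall>\<^sub>F e in at_right 0. norm (x e) \<le> rho e ^ q)"

definition rle :: "(real \<Rightarrow> real) \<Rightarrow> (real \<Rightarrow> real) \<Rightarrow> (real \<Rightarrow> real) \<Rightarrow> bool" where
  "rle rho x y \<longleftrightarrow> (\<exists>z. rnegligible rho z \<and> (\<forall>\<^sub>F e in at_right 0. x e \<le> y e + z e))"

definition rless :: "(real \<Rightarrow> real) \<Rightarrow> (real \<Rightarrow> real) \<Rightarrow> (real \<Rightarrow> real) \<Rightarrow> bool" where
  "rless rho x y \<longleftrightarrow> (\<exists>m::nat. \<forall>\<^sub>F e in at_right 0. y e - x e > rho e ^ m)"

definition hypernat :: "(real \<Rightarrow> real) \<Rightarrow> (real \<Rightarrow> nat) \<Rightarrow> bool" where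
  "hypernat rho N \<longleftrightarrow> rmoderate rho (\<lambda>e. real (N e))"

definition hsum :: "(nat \<Rightarrow> real \<Rightarrow> real) \<Rightarrow> (real \<Rightarrow> nat) \<Rightarrow> (real \<Rightarrow> nat) \<Rightarrow> real \<Rightarrow> real" where
  "hsum a N M = (\<lambda>e. \<Sum>n\<in>{N e..M e}. a n e)"

text \<open>Moderate over hypersums (membership in the real hyperseries space).\<close>
definition hs_moderate :: "(real \<Rightarrow> real) \<Rightarrow> (nat \<Rightarrow> real \<Rightarrow> real) \<Rightarrow> bool" where
  "hs_moderate rho a \<longleftrightarrow> (\<forall>N. hypernat rho N \<longrightarrow> rmoderate rho (hsum a (\<lambda>_. 0) N))"

definition hs_le :: "(real \<Rightarrow> real) \<Rightarrow> (nat \<Rightarrow> real \<Rightarrow> real) \<Rightarrow> (nat \<Rightarrow> real \<Rightarrow> real) \<Rightarrow> bool" where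
  "hs_le rho a b \<longleftrightarrow> (\<forall>N M. hypernat rho N \<longrightarrow> hypernat rho M \<longrightarrow> rle rho (hsum a N M) (hsum b N M))"

definition hyperlim :: "(real \<Rightarrow> real) \<Rightarrow> ((real \<Rightarrow> nat) \<Rightarrow> real \<Rightarrow> complex) \<Rightarrow> (real \<Rightarrow> complex) \<Rightarrow> bool" where
  "hyperlim rho s l \<longleftrightarrow> (\<forall>q::nat. \<exists>M. hypernat rho M \<and>
      (\<forall>n. hypernat rho n \<longrightarrow> rle rho (\<lambda>e. real (M e)) (\<lambda>e. real (n e)) \<longrightarrow>
           rless rho (\<lambda>e. cmod (s n e - l e)) (\<lambda>e. rho e ^ q)))"

definition hs_converges :: "(real \<Rightarrow> real) \<Rightarrow> (nat \<Rightarrow> real \<Rightarrow> real) \<Rightarrow> bool" where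
  "hs_converges rho a \<longleftrightarrow> (\<exists>l. rmoderate rho l \<and>
      hyperlim rho (\<lambda>N e. complex_of_real (hsum a (\<lambda>_. 0) N e)) l)"

definition hs_diverges_pinf :: "(real \<Rightarrow> real) \<Rightarrow> (nat \<Rightarrow> real \<Rightarrow> real) \<Rightarrow> bool" where
  "hs_diverges_pinf rho a \<longleftrightarrow> (\<forall>K. rmoderate rho K \<longrightarrow> (\<exists>M. hypernat rho M \<and>
      (\<forall>N. hypernat rho N \<longrightarrow> rle rho (\<lambda>e. real (M e)) (\<lambda>e. real (N e)) \<longrightarrow>
           rless rho K (hsum a (\<lambda>_. 0) N))))"

end

theory Submission
  imports Defs
begin

text \<open>
  Part (ii) is a pointwise estimate: for every eps, the partial sums of b dominate those of a
  up to |a_0 + ... + a_N0| and negligible errors, by the comparison of the tails beyond N0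
  and the nonnegativity of the hypersums.

  Part (i) goes through a Cauchy criterion. An estimate that holds eventually for every
  hypernatural index holds, for small eps, uniformly for all n <= rho_eps^-k: otherwise
  counterexamples chosen at each eps would form a hypernatural violating it. Hence the
  convergence of the partial sums of b gives Cauchy estimates that are uniform on windows
  [rho_eps^-K, rho_eps^-k], and these pass to a, whose increments are bounded by those of b
  up to negligible errors. A sequence that is Cauchy in this uniform sense converges in the
  generalized reals: at each eps, sample it at the index ceil(rho_eps^-K_j), where the level
  j = J(eps) tends to infinity and is chosen by a diagonal argument so that the first J(eps)
  Cauchy estimates already hold at eps.
\<close>

section \<open>Filters and powers of the gauge\<close>

lemma eventually_all_from_nets:
  assumes "\<forall>\<^sub>F e in F. \<exists>x. Q e x"
    and "\<And>X. \<forall>\<^sub>F e in F. Q e (X e) \<Longrightarrow> \<forall>\<^sub>F e in F. P e (X e)"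
  shows "\<forall>\<^sub>F e in F. \<forall>x. Q e x \<longrightarrow> P e x"
proof -
  define X where "X e = (SOME x. Q e x \<and> (P e x \<longrightarrow> (\<forall>y. Q e y \<longrightarrow> P e y)))" for e
  have X: "Q e (X e) \<and> (P e (X e) \<longrightarrow> (\<forall>y. Q e y \<longrightarrow> P e y))" if "\<exists>x. Q e x" for e
    unfolding X_def by (rule someI_ex) (use that in blast)
  have "\<forall>\<^sub>F e in F. Q e (X e)"
    using assms(1) by eventually_elim (use X in blast)
  then have "\<forall>\<^sub>F e in F. P e (X e)" by (rule assms(2))
  with assms(1) show ?thesis
    by eventually_elim (use X in blast)
qed

lemma eventually_at_right_diagonal:
  fixes E :: "nat \<Rightarrow> real \<Rightarrow> bool"
  assumes "\<And>j. \<forall>\<^sub>F e in at_right 0. E j e"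
  obtains J where "\<And>j. \<forall>\<^sub>F e in at_right 0. j \<le> J e" and "\<forall>\<^sub>F e in at_right 0. E (J e) e"
proof -
  have "\<forall>j. \<exists>b>0. \<forall>e>0. e < b \<longrightarrow> E j e"
    using assms unfolding eventually_at_right_field by blast
  then obtain d where d: "\<And>j. 0 < d j" "\<And>j e. 0 < e \<Longrightarrow> e < d j \<Longrightarrow> E j e"
    by (metis (full_types) choice)
  define D where "D j = min (1 / real (Suc j)) (d j)" for j
  define J where "J e = Max {j. e < D j}" for e
  have D_pos: "0 < D j" for j
    using d(1) by (simp add: D_def)
  have finite: "finite {j. e < D j}" if "0 < e" for e
  proof (rule finite_subset)
    show "{j. e < D j} \<subseteq> {..nat \<lceil>1 / e\<rceil>}"
    proof
      fix j assume "j \<in> {j. e < D j}"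
      then have "e < 1 / real (Suc j)" by (simp add: D_def)
      then have "real (Suc j) < 1 / e" using that by (simp add: field_simps)
      then show "j \<in> {..nat \<lceil>1 / e\<rceil>}" by simp linarith
    qed
  qed simp
  have J: "j \<le> J e" "e < D (J e)" if "0 < e" "e < D j" for e j
    using Max_ge[OF finite[OF that(1)], of j] Max_in[OF finite[OF that(1)]] that
    unfolding J_def by auto
  show ?thesis
  proof
    show "\<forall>\<^sub>F e in at_right 0. j \<le> J e" for j
      unfolding eventually_at_right_field using D_pos J(1) by blast
    have "E (J e) e" if "0 < e" "e < D 0" for e
      using J(2)[OF that] d(2)[OF that(1)] by (simp add: D_def)
    then show "\<forall>\<^sub>F e in at_right 0. E (J e) e"
      unfolding eventually_at_right_field using D_pos by blast
  qed
qed

lemma gauge_eventually_small: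
  assumes "gauge rho" "0 < c"
  shows "\<forall>\<^sub>F e in at_right 0. 0 < rho e \<and> rho e \<le> 1/2 \<and> rho e < c"
proof -
  have "\<forall>\<^sub>F e in at_right 0. e \<in> {0<..1::real}"
    unfolding eventually_at_right_field by (rule exI[of _ 1]) auto
  moreover have "\<forall>\<^sub>F e in at_right 0. rho e < min c (1/2)"
    using assms unfolding gauge_def by (intro order_tendstoD(2)) auto
  ultimately show ?thesis
    by eventually_elim (use assms in \<open>auto simp: gauge_def\<close>)
qed

lemma gauge_eventually_le_half:
  "gauge rho \<Longrightarrow> \<forall>\<^sub>F e in at_right 0. 0 < rho e \<and> rho e \<le> 1/2"
  by (rule eventually_mono[OF gauge_eventually_small[of rho 1]]) auto

lemma two_mult_power_Suc_le:
  fixes r :: real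
  assumes "0 \<le> r" "r \<le> 1/2"
  shows "2 * r ^ Suc q \<le> r ^ q"
proof -
  have "(2 * r) * r ^ q \<le> 1 * r ^ q"
    using assms by (intro mult_right_mono) auto
  then show ?thesis by simp
qed

lemma inverse_power_mono:
  fixes r :: real
  assumes "0 < r" "r \<le> 1" "k \<le> k'"
  shows "1 / r ^ k \<le> 1 / r ^ k'"
  using assms by (simp add: frac_le power_decreasing)

definition in_window :: "real \<Rightarrow> nat \<Rightarrow> nat \<Rightarrow> nat \<Rightarrow> bool" where
  "in_window r K k n \<longleftrightarrow> 1 / r ^ K \<le> real n \<and> real n \<le> 1 / r ^ k"

lemma in_window_mono:
  assumes "0 < r" "r \<le> 1" "K \<le> K'" "k \<le> k'" "in_window r K' k n"
  shows "in_window r K k' n"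
  using assms inverse_power_mono[of r K K'] inverse_power_mono[of r k k']
  unfolding in_window_def by linarith

lemma nat_ceiling_in_window:
  fixes r :: real
  assumes "0 < r" "r \<le> 1/2"
  shows "in_window r K (Suc K) (nat \<lceil>1 / r ^ K\<rceil>)"
proof -
  have ge1: "1 \<le> 1 / r ^ K"
    using assms by (simp add: power_le_one)
  have "real (nat \<lceil>1 / r ^ K\<rceil>) \<le> 1 / r ^ K + 1"
    using ge1 by linarith
  also have "\<dots> \<le> 2 / r ^ K"
    using ge1 by simp
  also have "\<dots> \<le> 1 / r ^ Suc K"
    using assms by (simp add: field_simps)
  finally show ?thesis
    using ge1 unfolding in_window_def by linarith
qed

section \<open>Moderate nets and hypernatural numbers\<close>

lemma rmoderate_mono:
  assumes "rmoderate rho x" "\<forall>\<^sub>F e in at_right 0. norm (y e) \<le> norm (x e)"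
  shows "rmoderate rho y"
proof -
  obtain N where "\<forall>\<^sub>F e in at_right 0. norm (x e) \<le> 1 / rho e ^ N"
    using assms(1) unfolding rmoderate_def by blast
  with assms(2) have "\<forall>\<^sub>F e in at_right 0. norm (y e) \<le> 1 / rho e ^ N"
    by eventually_elim linarith
  then show ?thesis unfolding rmoderate_def by blast
qed

lemma rmoderate_add:
  fixes x y :: "real \<Rightarrow> 'a::real_normed_vector"
  assumes "gauge rho" "rmoderate rho x" "rmoderate rho y"
  shows "rmoderate rho (\<lambda>e. x e + y e)"
proof -
  obtain N where N: "\<forall>\<^sub>F e in at_right 0. norm (x e) \<le> 1 / rho e ^ N"
    using assms(2) unfolding rmoderate_def by blast
  obtain M where M: "\<forall>\<^sub>F e in at_right 0. norm (y e) \<le> 1 / rho e ^ M"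
    using assms(3) unfolding rmoderate_def by blast
  have "\<forall>\<^sub>F e in at_right 0. norm (x e + y e) \<le> 1 / rho e ^ Suc (N + M)"
    using N M gauge_eventually_le_half[OF assms(1)]
  proof eventually_elim
    case (elim e)
    have "norm (x e + y e) \<le> 1 / rho e ^ (N + M) + 1 / rho e ^ (N + M)"
      using norm_triangle_ineq[of "x e" "y e"] elim
        inverse_power_mono[of "rho e" N "N + M"] inverse_power_mono[of "rho e" M "N + M"]
      by linarith
    also have "\<dots> \<le> 1 / rho e ^ Suc (N + M)"
      using elim by (simp add: field_simps)
    finally show ?case .
  qed
  then show ?thesis unfolding rmoderate_def by blast
qed

lemma rmoderate_of_nat_const:
  assumes "gauge rho"
  shows "rmoderate rho (\<lambda>e. real c)"
proof -
  have "\<forall>\<^sub>F e in at_right 0. norm (real c) \<le> 1 / rho e ^ c"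
    using gauge_eventually_le_half[OF assms]
  proof eventually_elim
    case (elim e)
    have "real c \<le> 2 ^ c"
      using less_exp[of c] by (metis less_imp_le of_nat_le_iff of_nat_numeral of_nat_power)
    also have "(2::real) ^ c \<le> (1 / rho e) ^ c"
      using elim by (intro power_mono) (auto simp: field_simps)
    finally show ?case by (simp add: power_one_over)
  qed
  then show ?thesis unfolding rmoderate_def by blast
qed

lemma rmoderate_near:
  fixes x y :: "real \<Rightarrow> real"
  assumes rho: "gauge rho" and "rmoderate rho x" "\<forall>\<^sub>F e in at_right 0. \<bar>x e - y e\<bar> \<le> 1"
  shows "rmoderate rho y"
proof -
  have "rmoderate rho (\<lambda>e. \<bar>x e\<bar>)"
    using assms(2) by (rule rmoderate_mono) simp
  then have "rmoderate rho (\<lambda>e. \<bar>x e\<bar> + real 1)"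
    by (rule rmoderate_add[OF rho _ rmoderate_of_nat_const[OF rho]])
  moreover have "\<forall>\<^sub>F e in at_right 0. norm (y e) \<le> norm (\<bar>x e\<bar> + real 1)"
    using assms(3) by eventually_elim auto
  ultimately show ?thesis
    by (rule rmoderate_mono)
qed

lemma hypernatI:
  "\<forall>\<^sub>F e in at_right 0. real (N e) \<le> 1 / rho e ^ k \<Longrightarrow> hypernat rho N"
  unfolding hypernat_def rmoderate_def by auto

lemma hypernat_imp_eventually_le:
  "hypernat rho N \<Longrightarrow> \<exists>k. \<forall>\<^sub>F e in at_right 0. real (N e) \<le> 1 / rho e ^ k"
  unfolding hypernat_def rmoderate_def by auto

lemma hypernat_const: "gauge rho \<Longrightarrow> hypernat rho (\<lambda>_. c)"
  unfolding hypernat_def by (rule rmoderate_of_nat_const)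

lemma hypernat_max:
  assumes "gauge rho" "hypernat rho N" "hypernat rho M"
  shows "hypernat rho (\<lambda>e. max (N e) (M e))"
proof -
  obtain k j where "\<forall>\<^sub>F e in at_right 0. real (N e) \<le> 1 / rho e ^ k"
    and "\<forall>\<^sub>F e in at_right 0. real (M e) \<le> 1 / rho e ^ j"
    using assms(2,3) hypernat_imp_eventually_le by blast
  then have "\<forall>\<^sub>F e in at_right 0. real (max (N e) (M e)) \<le> 1 / rho e ^ max k j"
    using gauge_eventually_le_half[OF assms(1)]
  proof eventually_elim
    case (elim e)
    then show ?case
      using inverse_power_mono[of "rho e" k "max k j"] inverse_power_mono[of "rho e" j "max k j"]
      by (auto simp: max_def)
  qed
  then show ?thesis by (rule hypernatI)
qed

lemma hypernat_nat_ceiling: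
  assumes "gauge rho"
  shows "hypernat rho (\<lambda>e. nat \<lceil>1 / rho e ^ K\<rceil>)"
proof (rule hypernatI[where k = "Suc K"])
  show "\<forall>\<^sub>F e in at_right 0. real (nat \<lceil>1 / rho e ^ K\<rceil>) \<le> 1 / rho e ^ Suc K"
    using gauge_eventually_le_half[OF assms]
    by eventually_elim (use nat_ceiling_in_window in \<open>auto simp: in_window_def\<close>)
qed

section \<open>Order on generalized reals\<close>

lemma rle_iff_eventually:
  assumes "gauge rho"
  shows "rle rho x y \<longleftrightarrow> (\<forall>q. \<forall>\<^sub>F e in at_right 0. x e \<le> y e + rho e ^ q)"
proof
  assume "rle rho x y"
  then obtain z where z: "rnegligible rho z" "\<forall>\<^sub>F e in at_right 0. x e \<le> y e + z e"
    unfolding rle_def by blast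
  show "\<forall>q. \<forall>\<^sub>F e in at_right 0. x e \<le> y e + rho e ^ q"
  proof
    fix q
    from z(1) have "\<forall>\<^sub>F e in at_right 0. norm (z e) \<le> rho e ^ q"
      unfolding rnegligible_def by blast
    with z(2) show "\<forall>\<^sub>F e in at_right 0. x e \<le> y e + rho e ^ q"
      by eventually_elim auto
  qed
next
  assume le: "\<forall>q. \<forall>\<^sub>F e in at_right 0. x e \<le> y e + rho e ^ q"
  have "rnegligible rho (\<lambda>e. max 0 (x e - y e))"
    unfolding rnegligible_def
  proof
    fix q
    from le[rule_format, of q] gauge_eventually_le_half[OF assms]
    show "\<forall>\<^sub>F e in at_right 0. norm (max 0 (x e - y e)) \<le> rho e ^ q"
      by eventually_elim auto
  qed
  then show "rle rho x y"
    unfolding rle_def by (intro exI[of _ "\<lambda>e. max 0 (x e - y e)"] conjI always_eventually allI) auto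
qed

lemma rle_of_eventually_le:
  assumes "gauge rho" "\<forall>\<^sub>F e in at_right 0. x e \<le> y e"
  shows "rle rho x y"
  unfolding rle_iff_eventually[OF assms(1)]
proof
  fix q
  from assms(2) gauge_eventually_le_half[OF assms(1)]
  show "\<forall>\<^sub>F e in at_right 0. x e \<le> y e + rho e ^ q"
  proof eventually_elim
    case (elim e)
    then have "0 \<le> rho e ^ q" by simp
    with elim show ?case by linarith
  qed
qed

lemma rle_nat_imp_eventually_le:
  assumes "gauge rho" "rle rho (\<lambda>e. real (M e)) (\<lambda>e. real (N e))"
  shows "\<forall>\<^sub>F e in at_right 0. M e \<le> N e"
proof -
  from assms(2) have "\<forall>\<^sub>F e in at_right 0. real (M e) \<le> real (N e) + rho e ^ 1"
    unfolding rle_iff_eventually[OF assms(1)] by blast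
  with gauge_eventually_le_half[OF assms(1)] show ?thesis
  proof eventually_elim
    case (elim e)
    then have "real (M e) < real (Suc (N e))" by simp
    then show ?case by simp
  qed
qed

lemma rless_imp_eventually_less:
  assumes "gauge rho" "rless rho x y"
  shows "\<forall>\<^sub>F e in at_right 0. x e < y e"
proof -
  obtain m where "\<forall>\<^sub>F e in at_right 0. y e - x e > rho e ^ m"
    using assms(2) unfolding rless_def by blast
  with gauge_eventually_le_half[OF assms(1)] show ?thesis
  proof eventually_elim
    case (elim e)
    then have "0 < rho e ^ m" by simp
    with elim show ?case by linarith
  qed
qed

lemma rlessI:
  assumes "gauge rho" "\<forall>\<^sub>F e in at_right 0. x e + rho e ^ m \<le> y e"
  shows "rless rho x y"
proof -
  from assms(2) gauge_eventually_le_half[OF assms(1)]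
  have "\<forall>\<^sub>F e in at_right 0. y e - x e > rho e ^ Suc m"
  proof eventually_elim
    case (elim e)
    have "rho e ^ Suc m < rho e ^ m"
      using elim by (intro power_strict_decreasing) auto
    with elim show ?case by linarith
  qed
  then show ?thesis unfolding rless_def by blast
qed

lemma rless_rle_trans:
  assumes "gauge rho" "rless rho x y" "rle rho y z"
  shows "rless rho x z"
proof -
  obtain m where "\<forall>\<^sub>F e in at_right 0. y e - x e > rho e ^ m"
    using assms(2) unfolding rless_def by blast
  moreover have "\<forall>\<^sub>F e in at_right 0. y e \<le> z e + rho e ^ Suc m"
    using assms(3) unfolding rle_iff_eventually[OF assms(1)] by blast
  ultimately have "\<forall>\<^sub>F e in at_right 0. x e + rho e ^ Suc m \<le> z e"
    using gauge_eventually_le_half[OF assms(1)]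
  proof eventually_elim
    case (elim e)
    have "2 * rho e ^ Suc m \<le> rho e ^ m"
      by (rule two_mult_power_Suc_le) (use elim in auto)
    with elim show ?case by linarith
  qed
  then show ?thesis by (rule rlessI[OF assms(1)])
qed

section \<open>Hypersums, uniformly in the indices\<close>

definition psum :: "(nat \<Rightarrow> real \<Rightarrow> real) \<Rightarrow> nat \<Rightarrow> real \<Rightarrow> real" where
  "psum a n e = (\<Sum>i\<in>{0..n}. a i e)"

lemma hsum_zero_eq_psum: "hsum a (\<lambda>_. 0) N = (\<lambda>e. psum a (N e) e)"
  by (simp add: hsum_def psum_def)

lemma sum_atLeastAtMost_split:
  fixes f :: "nat \<Rightarrow> 'a::comm_monoid_add"
  assumes "m \<le> Suc n" "n \<le> p"
  shows "(\<Sum>i\<in>{m..p}. f i) = (\<Sum>i\<in>{m..n}. f i) + (\<Sum>i\<in>{Suc n..p}. f i)"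
  using sum.ub_add_nat[of m n f "p - n"] assms by simp

lemma psum_diff: "n \<le> m \<Longrightarrow> psum a m e - psum a n e = (\<Sum>i\<in>{Suc n..m}. a i e)"
  unfolding psum_def using sum_atLeastAtMost_split[of 0 n m "\<lambda>i. a i e"] by simp

lemma eventually_all_bounded_of_hypernat:
  assumes "gauge rho" "\<And>N. hypernat rho N \<Longrightarrow> \<forall>\<^sub>F e in at_right 0. P e (N e)"
  shows "\<forall>\<^sub>F e in at_right 0. \<forall>n. real n \<le> 1 / rho e ^ k \<longrightarrow> P e n"
proof (rule eventually_all_from_nets)
  show "\<forall>\<^sub>F e in at_right 0. \<exists>n. real n \<le> 1 / rho e ^ k"
    using gauge_eventually_le_half[OF assms(1)] by eventually_elim (intro exI[of _ 0], simp)
next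
  fix N assume "\<forall>\<^sub>F e in at_right 0. real (N e) \<le> 1 / rho e ^ k"
  then show "\<forall>\<^sub>F e in at_right 0. P e (N e)" by (intro assms(2) hypernatI)
qed

lemma eventually_all_bounded_pairs_of_hypernat:
  assumes "gauge rho"
    and "\<And>N M. hypernat rho N \<Longrightarrow> hypernat rho M \<Longrightarrow> \<forall>\<^sub>F e in at_right 0. P e (N e) (M e)"
  shows "\<forall>\<^sub>F e in at_right 0. \<forall>n m. real n \<le> 1 / rho e ^ k \<longrightarrow> real m \<le> 1 / rho e ^ k \<longrightarrow> P e n m"
proof -
  have "\<forall>\<^sub>F e in at_right 0. \<forall>p. real (fst p) \<le> 1 / rho e ^ k \<and> real (snd p) \<le> 1 / rho e ^ k
          \<longrightarrow> P e (fst p) (snd p)"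
  proof (rule eventually_all_from_nets)
    show "\<forall>\<^sub>F e in at_right 0. \<exists>p. real (fst p) \<le> 1 / rho e ^ k \<and> real (snd p) \<le> 1 / rho e ^ k"
      using gauge_eventually_le_half[OF assms(1)] by eventually_elim (intro exI[of _ "(0, 0)"], simp)
  next
    fix X
    assume X: "\<forall>\<^sub>F e in at_right 0. real (fst (X e)) \<le> 1 / rho e ^ k \<and> real (snd (X e)) \<le> 1 / rho e ^ k"
    have "hypernat rho (\<lambda>e. fst (X e))" "hypernat rho (\<lambda>e. snd (X e))"
      using X by (auto intro!: hypernatI elim: eventually_mono)
    then show "\<forall>\<^sub>F e in at_right 0. P e (fst (X e)) (snd (X e))" by (rule assms(2))
  qed
  then show ?thesis
    by eventually_elim (metis fst_conv snd_conv)
qed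

lemma hs_le_uniform:
  assumes "gauge rho" "hs_le rho a b"
  shows "\<forall>\<^sub>F e in at_right 0. \<forall>n m. real m \<le> 1 / rho e ^ k \<longrightarrow>
           (\<Sum>i\<in>{n..m}. a i e) \<le> (\<Sum>i\<in>{n..m}. b i e) + rho e ^ q"
proof -
  have "\<forall>\<^sub>F e in at_right 0. hsum a N M e \<le> hsum b N M e + rho e ^ q"
    if "hypernat rho N" "hypernat rho M" for N M
    using assms(2) that unfolding hs_le_def rle_iff_eventually[OF assms(1)] by blast
  then have "\<forall>\<^sub>F e in at_right 0. \<forall>n m. real n \<le> 1 / rho e ^ k \<longrightarrow> real m \<le> 1 / rho e ^ k \<longrightarrow>
      (\<Sum>i\<in>{n..m}. a i e) \<le> (\<Sum>i\<in>{n..m}. b i e) + rho e ^ q"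
    unfolding hsum_def
    by (rule eventually_all_bounded_pairs_of_hypernat[OF assms(1),
          where P = "\<lambda>e n m. (\<Sum>i\<in>{n..m}. a i e) \<le> (\<Sum>i\<in>{n..m}. b i e) + rho e ^ q"])
  with gauge_eventually_le_half[OF assms(1)] show ?thesis
  proof eventually_elim
    case (elim e)
    show ?case
    proof (intro allI impI)
      fix n m assume m: "real m \<le> 1 / rho e ^ k"
      show "(\<Sum>i\<in>{n..m}. a i e) \<le> (\<Sum>i\<in>{n..m}. b i e) + rho e ^ q"
      proof (cases "n \<le> m")
        case True
        then have "real n \<le> 1 / rho e ^ k" using m by linarith
        with m elim(2) show ?thesis by blast
      next
        case False
        with elim(1) show ?thesis by simp
      qed
    qed
  qed
qed

lemma hs_nonneg_uniform:
  assumes "gauge rho" "hs_le rho (\<lambda>n e. 0) a"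
  shows "\<forall>\<^sub>F e in at_right 0. \<forall>n m. real m \<le> 1 / rho e ^ k \<longrightarrow> - (rho e ^ q) \<le> (\<Sum>i\<in>{n..m}. a i e)"
  using hs_le_uniform[OF assms, of k q]
proof eventually_elim
  case (elim e)
  show ?case
  proof (intro allI impI)
    fix n m assume "real m \<le> 1 / rho e ^ k"
    with elim have "0 \<le> (\<Sum>i\<in>{n..m}. a i e) + rho e ^ q" by simp
    then show "- (rho e ^ q) \<le> (\<Sum>i\<in>{n..m}. a i e)" by linarith
  qed
qed

lemma hs_le_shift_uniform:
  assumes "gauge rho" "hs_le rho (\<lambda>n e. a (n + N0) e) (\<lambda>n e. b (n + N0) e)"
  shows "\<forall>\<^sub>F e in at_right 0. \<forall>n m. N0 \<le> n \<longrightarrow> real m \<le> 1 / rho e ^ k \<longrightarrow>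
           (\<Sum>i\<in>{n..m}. a i e) \<le> (\<Sum>i\<in>{n..m}. b i e) + rho e ^ q"
  using hs_le_uniform[OF assms, of k q] gauge_eventually_le_half[OF assms(1)]
proof eventually_elim
  case (elim e)
  show ?case
  proof (intro allI impI)
    fix n m assume n: "N0 \<le> n" and m: "real m \<le> 1 / rho e ^ k"
    show "(\<Sum>i\<in>{n..m}. a i e) \<le> (\<Sum>i\<in>{n..m}. b i e) + rho e ^ q"
    proof (cases "n \<le> m")
      case True
      have shift: "(\<Sum>i\<in>{n - N0..m - N0}. f (i + N0)) = (\<Sum>i\<in>{n..m}. f i)" for f :: "nat \<Rightarrow> real"
        using sum.shift_bounds_cl_nat_ivl[of f "n - N0" N0 "m - N0"] n True by simp
      have "real (m - N0) \<le> 1 / rho e ^ k"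
        using m by (simp add: of_nat_diff)
      with elim(1) have "(\<Sum>i\<in>{n - N0..m - N0}. a (i + N0) e)
          \<le> (\<Sum>i\<in>{n - N0..m - N0}. b (i + N0) e) + rho e ^ q"
        by blast
      then show ?thesis
        unfolding shift[of "\<lambda>i. a i e"] shift[of "\<lambda>i. b i e"] .
    next
      case False
      with elim(2) show ?thesis by simp
    qed
  qed
qed

section \<open>Divergence to infinity\<close>

lemma partial_sum_comparison:
  fixes a b :: "nat \<Rightarrow> real"
  assumes "- \<delta> \<le> (\<Sum>i\<in>{Suc n..N0}. a i)"
    and "- \<delta> \<le> (\<Sum>i\<in>{0..n}. b i)" "- \<delta> \<le> (\<Sum>i\<in>{0..N0}. b i)"
    and "(\<Sum>i\<in>{Suc N0..n}. a i) \<le> (\<Sum>i\<in>{Suc N0..n}. b i) + \<delta>"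
  shows "(\<Sum>i\<in>{0..n}. a i) - \<bar>\<Sum>i\<in>{0..N0}. a i\<bar> - 2 * \<delta> \<le> (\<Sum>i\<in>{0..n}. b i)"
proof (cases "n < N0")
  case True
  then have "(\<Sum>i\<in>{0..N0}. a i) = (\<Sum>i\<in>{0..n}. a i) + (\<Sum>i\<in>{Suc n..N0}. a i)"
    by (intro sum_atLeastAtMost_split) auto
  with assms(1,2) show ?thesis by linarith
next
  case False
  then have split: "(\<Sum>i\<in>{0..n}. f i) = (\<Sum>i\<in>{0..N0}. f i) + (\<Sum>i\<in>{Suc N0..n}. f i)"
    for f :: "nat \<Rightarrow> real"
    by (intro sum_atLeastAtMost_split) auto
  show ?thesis
    using split[of a] split[of b] assms(3,4) by linarith
qed

lemma psum_rle_shifted: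
  assumes rho: "gauge rho"
    and a_nonneg: "hs_le rho (\<lambda>n e. 0) a" and b_nonneg: "hs_le rho (\<lambda>n e. 0) b"
    and shifted_le: "hs_le rho (\<lambda>n e. a (n + N0) e) (\<lambda>n e. b (n + N0) e)"
    and N: "hypernat rho N"
  shows "rle rho (\<lambda>e. psum a (N e) e - \<bar>psum a N0 e\<bar>) (\<lambda>e. psum b (N e) e)"
  unfolding rle_iff_eventually[OF rho]
proof
  fix q
  obtain k where k: "\<forall>\<^sub>F e in at_right 0. real (max (N e) N0) \<le> 1 / rho e ^ k"
    using hypernat_imp_eventually_le[OF hypernat_max[OF rho N hypernat_const[OF rho]]] by blast
  from k hs_nonneg_uniform[OF rho a_nonneg, of k "Suc q"]
    hs_nonneg_uniform[OF rho b_nonneg, of k "Suc q"]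
    hs_le_shift_uniform[OF rho shifted_le, of k "Suc q"] gauge_eventually_le_half[OF rho]
  show "\<forall>\<^sub>F e in at_right 0. psum a (N e) e - \<bar>psum a N0 e\<bar> \<le> psum b (N e) e + rho e ^ q"
  proof eventually_elim
    case (elim e)
    have "real (N e) \<le> 1 / rho e ^ k" "real N0 \<le> 1 / rho e ^ k"
      using elim(1) by auto
    then have "psum a (N e) e - \<bar>psum a N0 e\<bar> - 2 * rho e ^ Suc q \<le> psum b (N e) e"
      unfolding psum_def using elim(2-4) by (intro partial_sum_comparison) auto
    moreover have "2 * rho e ^ Suc q \<le> rho e ^ q"
      using elim(5) by (intro two_mult_power_Suc_le) auto
    ultimately show ?case by linarith
  qed
qed

lemma hs_diverges_pinf_comparison:
  assumes rho: "gauge rho" and a_moderate: "hs_moderate rho a"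
    and a_nonneg: "hs_le rho (\<lambda>n e. 0) a" and b_nonneg: "hs_le rho (\<lambda>n e. 0) b"
    and shifted_le: "hs_le rho (\<lambda>n e. a (n + N0) e) (\<lambda>n e. b (n + N0) e)"
    and a_diverges: "hs_diverges_pinf rho a"
  shows "hs_diverges_pinf rho b"
  unfolding hs_diverges_pinf_def
proof (intro allI impI)
  fix K :: "real \<Rightarrow> real" assume K: "rmoderate rho K"
  define A0 where "A0 e = psum a N0 e" for e
  have "rmoderate rho A0"
    using a_moderate hypernat_const[OF rho, of N0]
    unfolding hs_moderate_def A0_def hsum_zero_eq_psum by auto
  then have "rmoderate rho (\<lambda>e. \<bar>A0 e\<bar>)"
    by (rule rmoderate_mono) simp
  then have "rmoderate rho (\<lambda>e. K e + \<bar>A0 e\<bar>)"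
    by (rule rmoderate_add[OF rho K])
  then obtain M where M: "hypernat rho M"
    "\<And>N. hypernat rho N \<Longrightarrow> rle rho (\<lambda>e. real (M e)) (\<lambda>e. real (N e)) \<Longrightarrow>
       rless rho (\<lambda>e. K e + \<bar>A0 e\<bar>) (\<lambda>e. psum a (N e) e)"
    using a_diverges[unfolded hs_diverges_pinf_def hsum_zero_eq_psum, rule_format] by blast
  show "\<exists>M. hypernat rho M \<and> (\<forall>N. hypernat rho N \<longrightarrow> rle rho (\<lambda>e. real (M e)) (\<lambda>e. real (N e))
          \<longrightarrow> rless rho K (hsum b (\<lambda>_. 0) N))"
  proof (intro exI conjI allI impI)
    show "hypernat rho M" by (rule M(1))
    fix N assume N: "hypernat rho N" "rle rho (\<lambda>e. real (M e)) (\<lambda>e. real (N e))"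
    have "rless rho K (\<lambda>e. psum a (N e) e - \<bar>A0 e\<bar>)"
      using M(2)[OF N] unfolding rless_def by (simp add: algebra_simps)
    moreover have "rle rho (\<lambda>e. psum a (N e) e - \<bar>A0 e\<bar>) (\<lambda>e. psum b (N e) e)"
      unfolding A0_def by (rule psum_rle_shifted[OF rho a_nonneg b_nonneg shifted_le N(1)])
    ultimately show "rless rho K (hsum b (\<lambda>_. 0) N)"
      unfolding hsum_zero_eq_psum by (rule rless_rle_trans[OF rho])
  qed
qed

section \<open>Convergence\<close>

definition hcauchy :: "(real \<Rightarrow> real) \<Rightarrow> (nat \<Rightarrow> real \<Rightarrow> real) \<Rightarrow> bool" where
  "hcauchy rho S \<longleftrightarrow> (\<forall>q. \<exists>K. \<forall>k. \<forall>\<^sub>F e in at_right 0. \<forall>n m.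
     in_window (rho e) K k n \<longrightarrow> in_window (rho e) K k m \<longrightarrow> \<bar>S m e - S n e\<bar> \<le> rho e ^ q)"

definition htendsto :: "(real \<Rightarrow> real) \<Rightarrow> (nat \<Rightarrow> real \<Rightarrow> real) \<Rightarrow> (real \<Rightarrow> real) \<Rightarrow> bool" where
  "htendsto rho S l \<longleftrightarrow> (\<forall>q. \<exists>K. \<forall>k. \<forall>\<^sub>F e in at_right 0. \<forall>n.
     in_window (rho e) K k n \<longrightarrow> \<bar>S n e - l e\<bar> \<le> rho e ^ q)"

lemma hyperlim_eventually_close:
  fixes s :: "nat \<Rightarrow> real \<Rightarrow> complex"
  assumes rho: "gauge rho" and lim: "hyperlim rho (\<lambda>N e. s (N e) e) l"
  obtains M where "hypernat rho M"
    and "\<And>N. hypernat rho N \<Longrightarrow> \<forall>\<^sub>F e in at_right 0. M e \<le> N e \<longrightarrow> cmod (s (N e) e - l e) < rho e ^ q"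
proof -
  obtain M where M: "hypernat rho M"
    "\<And>N. hypernat rho N \<Longrightarrow> rle rho (\<lambda>e. real (M e)) (\<lambda>e. real (N e)) \<Longrightarrow>
       rless rho (\<lambda>e. cmod (s (N e) e - l e)) (\<lambda>e. rho e ^ q)"
    using lim unfolding hyperlim_def by blast
  have "\<forall>\<^sub>F e in at_right 0. M e \<le> N e \<longrightarrow> cmod (s (N e) e - l e) < rho e ^ q"
    if N: "hypernat rho N" for N
  proof -
    define N' where "N' e = max (M e) (N e)" for e
    have "hypernat rho N'"
      unfolding N'_def by (rule hypernat_max[OF rho M(1) N])
    moreover have "rle rho (\<lambda>e. real (M e)) (\<lambda>e. real (N' e))"
      by (rule rle_of_eventually_le[OF rho]) (simp add: N'_def)
    ultimately have "\<forall>\<^sub>F e in at_right 0. cmod (s (N' e) e - l e) < rho e ^ q"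
      using M(2) rless_imp_eventually_less[OF rho] by blast
    then show ?thesis
      by eventually_elim (auto simp: N'_def max_absorb2)
  qed
  with M(1) show ?thesis by (rule that)
qed

lemma htendsto_of_hyperlim:
  assumes rho: "gauge rho" and lim: "hyperlim rho (\<lambda>N e. complex_of_real (S (N e) e)) l"
  shows "htendsto rho S (\<lambda>e. Re (l e))"
  unfolding htendsto_def
proof
  fix q
  obtain M where M: "hypernat rho M"
    "\<And>N. hypernat rho N \<Longrightarrow>
       \<forall>\<^sub>F e in at_right 0. M e \<le> N e \<longrightarrow> cmod (complex_of_real (S (N e) e) - l e) < rho e ^ q"
    using hyperlim_eventually_close[OF rho lim] by blast
  have Re_le: "\<bar>S n e - Re (l e)\<bar> \<le> cmod (complex_of_real (S n e) - l e)" for n e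
    using abs_Re_le_cmod[of "complex_of_real (S n e) - l e"] by simp
  have uniform: "\<forall>\<^sub>F e in at_right 0. \<forall>n. real n \<le> 1 / rho e ^ k \<longrightarrow>
      M e \<le> n \<longrightarrow> cmod (complex_of_real (S n e) - l e) < rho e ^ q" for k
    by (rule eventually_all_bounded_of_hypernat[OF rho M(2)])
  obtain K where K: "\<forall>\<^sub>F e in at_right 0. real (M e) \<le> 1 / rho e ^ K"
    using hypernat_imp_eventually_le[OF M(1)] by blast
  show "\<exists>K. \<forall>k. \<forall>\<^sub>F e in at_right 0. \<forall>n. in_window (rho e) K k n \<longrightarrow> \<bar>S n e - Re (l e)\<bar> \<le> rho e ^ q"
  proof (intro exI allI)
    fix k
    from uniform[of k] K
    show "\<forall>\<^sub>F e in at_right 0. \<forall>n. in_window (rho e) K k n \<longrightarrow> \<bar>S n e - Re (l e)\<bar> \<le> rho e ^ q"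
    proof eventually_elim
      case (elim e)
      show ?case
      proof (intro allI impI)
        fix n assume "in_window (rho e) K k n"
        then have "real n \<le> 1 / rho e ^ k" "real (M e) \<le> real n"
          using elim(2) unfolding in_window_def by linarith+
        with elim(1) Re_le[of n e] show "\<bar>S n e - Re (l e)\<bar> \<le> rho e ^ q"
          by fastforce
      qed
    qed
  qed
qed

lemma hcauchy_of_htendsto:
  assumes rho: "gauge rho" and "htendsto rho S l"
  shows "hcauchy rho S"
  unfolding hcauchy_def
proof
  fix q
  obtain K where K: "\<And>k. \<forall>\<^sub>F e in at_right 0. \<forall>n.
      in_window (rho e) K k n \<longrightarrow> \<bar>S n e - l e\<bar> \<le> rho e ^ Suc q"
    using assms(2) unfolding htendsto_def by blast
  show "\<exists>K. \<forall>k. \<forall>\<^sub>F e in at_right 0. \<forall>n m.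
      in_window (rho e) K k n \<longrightarrow> in_window (rho e) K k m \<longrightarrow> \<bar>S m e - S n e\<bar> \<le> rho e ^ q"
  proof (intro exI allI)
    fix k
    from K[of k] gauge_eventually_le_half[OF rho]
    show "\<forall>\<^sub>F e in at_right 0. \<forall>n m.
        in_window (rho e) K k n \<longrightarrow> in_window (rho e) K k m \<longrightarrow> \<bar>S m e - S n e\<bar> \<le> rho e ^ q"
    proof eventually_elim
      case (elim e)
      have "2 * rho e ^ Suc q \<le> rho e ^ q"
        using elim(2) by (intro two_mult_power_Suc_le) auto
      show ?case
      proof (intro allI impI)
        fix n m assume "in_window (rho e) K k n" "in_window (rho e) K k m"
        with elim(1) have "\<bar>S n e - l e\<bar> \<le> rho e ^ Suc q" "\<bar>S m e - l e\<bar> \<le> rho e ^ Suc q"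
          by blast+
        with \<open>2 * rho e ^ Suc q \<le> rho e ^ q\<close> show "\<bar>S m e - S n e\<bar> \<le> rho e ^ q"
          by linarith
      qed
    qed
  qed
qed

lemma psum_diff_comparison:
  assumes "n \<le> m"
    and "- \<delta> \<le> (\<Sum>i\<in>{Suc n..m}. a i e)"
    and "(\<Sum>i\<in>{Suc n..m}. a i e) \<le> (\<Sum>i\<in>{Suc n..m}. b i e) + \<delta>"
    and "\<bar>psum b m e - psum b n e\<bar> \<le> \<delta>"
  shows "\<bar>psum a m e - psum a n e\<bar> \<le> 2 * \<delta>"
  using assms psum_diff[OF assms(1), of a e] psum_diff[OF assms(1), of b e] by linarith

lemma hcauchy_psum_comparison:
  assumes rho: "gauge rho"
    and a_nonneg: "hs_le rho (\<lambda>n e. 0) a"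
    and shifted_le: "hs_le rho (\<lambda>n e. a (n + N0) e) (\<lambda>n e. b (n + N0) e)"
    and b_cauchy: "hcauchy rho (psum b)"
  shows "hcauchy rho (psum a)"
  unfolding hcauchy_def
proof
  fix q
  obtain K where K: "\<And>k. \<forall>\<^sub>F e in at_right 0. \<forall>n m. in_window (rho e) K k n \<longrightarrow>
      in_window (rho e) K k m \<longrightarrow> \<bar>psum b m e - psum b n e\<bar> \<le> rho e ^ Suc q"
    using b_cauchy unfolding hcauchy_def by blast
  show "\<exists>K. \<forall>k. \<forall>\<^sub>F e in at_right 0. \<forall>n m. in_window (rho e) K k n \<longrightarrow>
      in_window (rho e) K k m \<longrightarrow> \<bar>psum a m e - psum a n e\<bar> \<le> rho e ^ q"
  proof (intro exI allI)
    fix k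
    \<comment> \<open>rho < 1/(N0 + 1) puts every index of the window beyond N0, where the shifted comparison applies\<close>
    have "0 < 1 / (real N0 + 1)" by simp
    from K[of k] hs_nonneg_uniform[OF rho a_nonneg, of k "Suc q"]
      hs_le_shift_uniform[OF rho shifted_le, of k "Suc q"] gauge_eventually_small[OF rho this]
    show "\<forall>\<^sub>F e in at_right 0. \<forall>n m. in_window (rho e) (Suc K) k n \<longrightarrow>
        in_window (rho e) (Suc K) k m \<longrightarrow> \<bar>psum a m e - psum a n e\<bar> \<le> rho e ^ q"
    proof eventually_elim
      case (elim e)
      have r: "0 < rho e" "rho e \<le> 1/2" using elim(4) by auto
      have bound: "\<bar>psum a m e - psum a n e\<bar> \<le> rho e ^ q"
        if nm: "n \<le> m" and windows: "in_window (rho e) (Suc K) k n" "in_window (rho e) (Suc K) k m"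
        for n m
      proof -
        have "real N0 < 1 / rho e ^ 1"
          using elim(4) by (simp add: field_simps)
        also have "\<dots> \<le> real n"
          using windows(1) inverse_power_mono[of "rho e" 1 "Suc K"] r unfolding in_window_def by auto
        finally have "N0 \<le> Suc n" by simp
        moreover have "real m \<le> 1 / rho e ^ k"
          using windows(2) unfolding in_window_def by simp
        ultimately have a_lower: "- (rho e ^ Suc q) \<le> (\<Sum>i\<in>{Suc n..m}. a i e)"
          and a_upper: "(\<Sum>i\<in>{Suc n..m}. a i e) \<le> (\<Sum>i\<in>{Suc n..m}. b i e) + rho e ^ Suc q"
          using elim(2,3) by blast+
        have "in_window (rho e) K k n" "in_window (rho e) K k m"
          using windows r by (auto intro: in_window_mono[of _ K "Suc K"])
        with elim(1) have b_close: "\<bar>psum b m e - psum b n e\<bar> \<le> rho e ^ Suc q"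
          by blast
        have "\<bar>psum a m e - psum a n e\<bar> \<le> 2 * rho e ^ Suc q"
          by (rule psum_diff_comparison[where a = a and b = b, OF nm a_lower a_upper b_close])
        also have "\<dots> \<le> rho e ^ q"
          using r by (intro two_mult_power_Suc_le) auto
        finally show ?thesis .
      qed
      show ?case
      proof (intro allI impI)
        fix n m assume "in_window (rho e) (Suc K) k n" "in_window (rho e) (Suc K) k m"
        then show "\<bar>psum a m e - psum a n e\<bar> \<le> rho e ^ q"
          using bound[of n m] bound[of m n] by (cases "n \<le> m") (auto simp: abs_minus_commute)
      qed
    qed
  qed
qed

lemma hcauchy_strict_mono_index:
  assumes rho: "gauge rho" and "hcauchy rho S"
  obtains K where "strict_mono K"
    and "\<And>q k. \<forall>\<^sub>F e in at_right 0. \<forall>n m. in_window (rho e) (K q) k n \<longrightarrow>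
           in_window (rho e) (K q) k m \<longrightarrow> \<bar>S m e - S n e\<bar> \<le> rho e ^ q"
proof -
  obtain K0 where K0: "\<forall>q k. \<forall>\<^sub>F e in at_right 0. \<forall>n m. in_window (rho e) (K0 q) k n \<longrightarrow>
      in_window (rho e) (K0 q) k m \<longrightarrow> \<bar>S m e - S n e\<bar> \<le> rho e ^ q"
    using choice[OF assms(2)[unfolded hcauchy_def]] by blast
  define K where "K q = (\<Sum>i\<le>q. K0 i) + q" for q
  have "strict_mono K"
    unfolding strict_mono_Suc_iff K_def by simp
  have K0_le: "K0 q \<le> K q" for q
    using member_le_sum[of q "{..q}" K0] unfolding K_def by simp
  have "\<forall>\<^sub>F e in at_right 0. \<forall>n m. in_window (rho e) (K q) k n \<longrightarrow>
      in_window (rho e) (K q) k m \<longrightarrow> \<bar>S m e - S n e\<bar> \<le> rho e ^ q" for q k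
    using K0[rule_format, of q k] gauge_eventually_le_half[OF rho]
  proof eventually_elim
    case (elim e)
    then show ?case
      using in_window_mono[of "rho e" "K0 q" "K q" k k] K0_le[of q] by auto
  qed
  with \<open>strict_mono K\<close> show ?thesis by (rule that)
qed

lemma hcauchy_diagonal_levels:
  assumes rho: "gauge rho" and cauchy: "hcauchy rho S"
  obtains K J where "strict_mono K" and "\<And>j. \<forall>\<^sub>F e in at_right 0. j \<le> J e"
    and "\<forall>\<^sub>F e in at_right 0. 0 < rho e \<and> rho e \<le> 1/2 \<and> (\<forall>q\<le>J e. \<forall>n m.
           in_window (rho e) (K q) (K (Suc (J e))) n \<longrightarrow> in_window (rho e) (K q) (K (Suc (J e))) m \<longrightarrow>
           \<bar>S m e - S n e\<bar> \<le> rho e ^ q)"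
proof -
  obtain K where K: "strict_mono K"
    and cauchy_K: "\<And>q k. \<forall>\<^sub>F e in at_right 0. \<forall>n m. in_window (rho e) (K q) k n \<longrightarrow>
           in_window (rho e) (K q) k m \<longrightarrow> \<bar>S m e - S n e\<bar> \<le> rho e ^ q"
    using hcauchy_strict_mono_index[OF rho cauchy] by blast
  define E where "E j e \<longleftrightarrow> 0 < rho e \<and> rho e \<le> 1/2 \<and> (\<forall>q\<in>{..j}. \<forall>n m.
      in_window (rho e) (K q) (K (Suc j)) n \<longrightarrow> in_window (rho e) (K q) (K (Suc j)) m \<longrightarrow>
      \<bar>S m e - S n e\<bar> \<le> rho e ^ q)" for j e
  have E_eventually: "\<forall>\<^sub>F e in at_right 0. E j e" for j
    unfolding E_def using gauge_eventually_le_half[OF rho] cauchy_K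
    by (simp add: eventually_conj_iff eventually_ball_finite_distrib)
  obtain J where J: "\<And>j. \<forall>\<^sub>F e in at_right 0. j \<le> J e" "\<forall>\<^sub>F e in at_right 0. E (J e) e"
    using eventually_at_right_diagonal[of E, OF E_eventually] by metis
  show ?thesis
    using that[OF K J(1)] J(2) unfolding E_def Ball_def atMost_iff by blast
qed

lemma htendsto_of_hcauchy:
  assumes rho: "gauge rho" and cauchy: "hcauchy rho S"
    and moderate: "\<And>N. hypernat rho N \<Longrightarrow> rmoderate rho (\<lambda>e. S (N e) e)"
  obtains l where "rmoderate rho l" and "htendsto rho S l"
proof -
  obtain K J where K: "strict_mono K" and J_ge: "\<And>j. \<forall>\<^sub>F e in at_right 0. j \<le> J e"
    and E_J: "\<forall>\<^sub>F e in at_right 0. 0 < rho e \<and> rho e \<le> 1/2 \<and> (\<forall>q\<le>J e. \<forall>n m.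
           in_window (rho e) (K q) (K (Suc (J e))) n \<longrightarrow> in_window (rho e) (K q) (K (Suc (J e))) m \<longrightarrow>
           \<bar>S m e - S n e\<bar> \<le> rho e ^ q)"
    using hcauchy_diagonal_levels[OF rho cauchy] by blast
  define l where "l e = S (nat \<lceil>1 / rho e ^ K (J e)\<rceil>) e" for e
  have close: "\<bar>S n e - l e\<bar> \<le> rho e ^ q"
    if E: "0 < rho e \<and> rho e \<le> 1/2 \<and> (\<forall>q\<le>J e. \<forall>n m.
           in_window (rho e) (K q) (K (Suc (J e))) n \<longrightarrow> in_window (rho e) (K q) (K (Suc (J e))) m \<longrightarrow>
           \<bar>S m e - S n e\<bar> \<le> rho e ^ q)"
      and q: "q \<le> J e" and n: "in_window (rho e) (K q) (K (Suc (J e))) n" for e q n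
  proof -
    have "K q \<le> K (J e)" "Suc (K (J e)) \<le> K (Suc (J e))"
      using K q by (simp_all add: strict_mono_less_eq Suc_leI strict_monoD)
    then have "in_window (rho e) (K q) (K (Suc (J e))) (nat \<lceil>1 / rho e ^ K (J e)\<rceil>)"
      using E by (intro in_window_mono[OF _ _ _ _ nat_ceiling_in_window]) auto
    with E q n show ?thesis
      unfolding l_def by (auto simp: abs_minus_commute)
  qed
  have "htendsto rho S l"
    unfolding htendsto_def
  proof (intro allI exI)
    fix q k
    from E_J J_ge[of q] J_ge[of k]
    show "\<forall>\<^sub>F e in at_right 0. \<forall>n. in_window (rho e) (K q) k n \<longrightarrow> \<bar>S n e - l e\<bar> \<le> rho e ^ q"
    proof eventually_elim
      case (elim e)
      have "k \<le> K (Suc (J e))"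
        using elim(3) strict_mono_imp_increasing[OF K, of "Suc (J e)"] by linarith
      moreover have "0 < rho e" "rho e \<le> 1"
        using elim(1) by simp_all
      ultimately show ?case
        using close[OF elim(1,2)] in_window_mono[of "rho e" "K q" "K q" k] by blast
    qed
  qed
  moreover have "rmoderate rho l"
  proof (rule rmoderate_near[OF rho moderate[OF hypernat_nat_ceiling[OF rho, of "K 0"]]])
    show "\<forall>\<^sub>F e in at_right 0. \<bar>S (nat \<lceil>1 / rho e ^ K 0\<rceil>) e - l e\<bar> \<le> 1"
      using E_J
    proof eventually_elim
      case (elim e)
      have "Suc (K 0) \<le> K (Suc (J e))"
        using K by (simp add: Suc_leI strict_monoD)
      then have "in_window (rho e) (K 0) (K (Suc (J e))) (nat \<lceil>1 / rho e ^ K 0\<rceil>)"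
        using elim by (intro in_window_mono[OF _ _ _ _ nat_ceiling_in_window]) auto
      then show ?case
        using close[OF elim, of 0] by simp
    qed
  qed
  ultimately show ?thesis by (rule that[rotated])
qed

lemma hyperlim_of_htendsto:
  assumes rho: "gauge rho" and "htendsto rho S l"
  shows "hyperlim rho (\<lambda>N e. complex_of_real (S (N e) e)) (\<lambda>e. complex_of_real (l e))"
  unfolding hyperlim_def
proof
  fix q
  obtain K where K: "\<And>k. \<forall>\<^sub>F e in at_right 0. \<forall>n.
      in_window (rho e) K k n \<longrightarrow> \<bar>S n e - l e\<bar> \<le> rho e ^ Suc q"
    using assms(2) unfolding htendsto_def by blast
  define M where "M e = nat \<lceil>1 / rho e ^ K\<rceil>" for e
  show "\<exists>M. hypernat rho M \<and> (\<forall>N. hypernat rho N \<longrightarrow> rle rho (\<lambda>e. real (M e)) (\<lambda>e. real (N e)) \<longrightarrow>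
      rless rho (\<lambda>e. cmod (complex_of_real (S (N e) e) - complex_of_real (l e))) (\<lambda>e. rho e ^ q))"
  proof (intro exI conjI allI impI)
    show "hypernat rho M"
      unfolding M_def by (rule hypernat_nat_ceiling[OF rho])
    fix N assume N: "hypernat rho N" "rle rho (\<lambda>e. real (M e)) (\<lambda>e. real (N e))"
    obtain k where k: "\<forall>\<^sub>F e in at_right 0. real (N e) \<le> 1 / rho e ^ k"
      using hypernat_imp_eventually_le[OF N(1)] by blast
    from K[of k] k rle_nat_imp_eventually_le[OF rho N(2)] gauge_eventually_le_half[OF rho]
    have "\<forall>\<^sub>F e in at_right 0.
        cmod (complex_of_real (S (N e) e) - complex_of_real (l e)) + rho e ^ Suc q \<le> rho e ^ q"
    proof eventually_elim
      case (elim e)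
      have "1 / rho e ^ K \<le> real (M e)"
        using nat_ceiling_in_window[of "rho e" K] elim(4) unfolding M_def in_window_def by auto
      also have "\<dots> \<le> real (N e)"
        using elim(3) by simp
      finally have "\<bar>S (N e) e - l e\<bar> \<le> rho e ^ Suc q"
        using elim(1,2) unfolding in_window_def by blast
      moreover have "2 * rho e ^ Suc q \<le> rho e ^ q"
        using elim(4) by (intro two_mult_power_Suc_le) auto
      moreover have "cmod (complex_of_real (S (N e) e) - complex_of_real (l e)) = \<bar>S (N e) e - l e\<bar>"
        by (metis norm_of_real of_real_diff)
      ultimately show ?case by linarith
    qed
    then show "rless rho (\<lambda>e. cmod (complex_of_real (S (N e) e) - complex_of_real (l e))) (\<lambda>e. rho e ^ q)"
      by (rule rlessI[OF rho])
  qed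
qed

lemma hs_converges_comparison:
  assumes rho: "gauge rho" and a_moderate: "hs_moderate rho a"
    and a_nonneg: "hs_le rho (\<lambda>n e. 0) a"
    and shifted_le: "hs_le rho (\<lambda>n e. a (n + N0) e) (\<lambda>n e. b (n + N0) e)"
    and b_converges: "hs_converges rho b"
  shows "hs_converges rho a"
proof -
  obtain lb where "hyperlim rho (\<lambda>N e. complex_of_real (psum b (N e) e)) lb"
    using b_converges unfolding hs_converges_def hsum_zero_eq_psum by blast
  then have "htendsto rho (psum b) (\<lambda>e. Re (lb e))"
    by (rule htendsto_of_hyperlim[OF rho])
  then have "hcauchy rho (psum b)"
    by (rule hcauchy_of_htendsto[OF rho])
  then have "hcauchy rho (psum a)"
    by (rule hcauchy_psum_comparison[OF rho a_nonneg shifted_le])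
  moreover have "rmoderate rho (\<lambda>e. psum a (N e) e)" if "hypernat rho N" for N
    using a_moderate that unfolding hs_moderate_def hsum_zero_eq_psum by blast
  ultimately obtain l where l: "rmoderate rho l" "htendsto rho (psum a) l"
    using htendsto_of_hcauchy[OF rho] by blast
  have "rmoderate rho (\<lambda>e. complex_of_real (l e))"
    using l(1) by (rule rmoderate_mono) simp
  with hyperlim_of_htendsto[OF rho l(2)] show ?thesis
    unfolding hs_converges_def hsum_zero_eq_psum by blast
qed

theorem theorem2p16:
  fixes rho :: "real \<Rightarrow> real" and a b :: "nat \<Rightarrow> real \<Rightarrow> real"
  assumes "gauge rho"
    and "hs_moderate rho a" and "hs_moderate rho b"
    and "hs_le rho (\<lambda>n e. 0) a" and "hs_le rho (\<lambda>n e. 0) b"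
    and "\<exists>N::nat. hs_le rho (\<lambda>n e. a (n + N) e) (\<lambda>n e. b (n + N) e)"
  shows "(hs_converges rho b \<longrightarrow> hs_converges rho a) \<and>
         (hs_diverges_pinf rho a \<longrightarrow> hs_diverges_pinf rho b)"
proof -
  obtain N0 where shifted_le: "hs_le rho (\<lambda>n e. a (n + N0) e) (\<lambda>n e. b (n + N0) e)"
    using assms(6) by blast
  show ?thesis
    using hs_converges_comparison[OF assms(1,2,4) shifted_le]
      hs_diverges_pinf_comparison[OF assms(1,2,4,5) shifted_le]
    by blast
qed

end
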